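(* Let $n=2k$ and let $X\subset\mathbb{P}^{n-1}_\mathbb{C}$ be the smooth quadric $\sum_{j=1}^k z_{2j-1}z_{2j}=0$, with the action of $T=(S^1)^k$ (restricted from $T_\mathbb{C}=(\mathbb{C}^* )^k$) given by $t\cdot(z_1:\dots:z_n)=(t_1z_1:t_1^{-1}z_2:\dots:t_kz_{2k-1}:t_k^{-1}z_{2k})$, moment map \[\mu(z_1:\dots:z_n)=\frac{1}{\sum_{i=1}^n|z_i|^2}\sum_{j=1}^k(|z_{2j-1}|^2-|z_{2j}|^2)e_j,\] and $P=\mu(X)=\mathrm{conv}(\pm e_1,\dots,\pm e_k)$. Let $q\colon\mathbb{P}^{n-1}_\mathbb{C}\dashrightarrow\mathbb{P}^{k-2}_\mathbb{C}$ be the rational map $(z_1:\dots:z_n)\mapsto(z_3z_4:\dots:z_{n-1}z_n)$. Then for every $u$ in the interior $P^\circ$ of $P$, $q$ is defined on $\mu^{-1}(u)\cap X$ and $q|_{\mu^{-1}(u)}\colon\mu^{-1}(u)\to\mathbb{P}^{k-2}_\mathbb{C}$ is a quotient map to the $T$-orbit space of the fibre, i.e. two points of $\mu^{-1}(u)$ have the same image under $q$ if and only if they lie in the same $T$-orbit.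
   Context: $e_j$ denotes the $j$-th standard basis vector of $\mathbb{R}^k$. *)

theory Defs
  imports "HOL-Analysis.Analysis"
begin

text \<open>Homogeneous coordinates of P^{n-1}, n = 2k, are grouped in pairs indexed by
  the torus index type 'k:  a j = z_{2j-1},  b j = z_{2j}.\<close>

definition nonzero_pt :: "('k \<Rightarrow> complex) \<Rightarrow> ('k \<Rightarrow> complex) \<Rightarrow> bool" where
  "nonzero_pt a b \<longleftrightarrow> (\<exists>j. a j \<noteq> 0 \<or> b j \<noteq> 0)"

definition proj_eq2 :: "('k \<Rightarrow> complex) \<Rightarrow> ('k \<Rightarrow> complex) \<Rightarrow> ('k \<Rightarrow> complex) \<Rightarrow> ('k \<Rightarrow> complex) \<Rightarrow> bool" where
  "proj_eq2 a b a' b' \<longleftrightarrow> (\<exists>c. c \<noteq> 0 \<and> (\<forall>j. a' j = c * a j \<and> b' j = c * b j))"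

definition proj_eq :: "('i \<Rightarrow> complex) \<Rightarrow> ('i \<Rightarrow> complex) \<Rightarrow> bool" where
  "proj_eq v w \<longleftrightarrow> (\<exists>c. c \<noteq> 0 \<and> (\<forall>i. w i = c * v i))"

definition in_quadric :: "('k::finite \<Rightarrow> complex) \<Rightarrow> ('k \<Rightarrow> complex) \<Rightarrow> bool" where
  "in_quadric a b \<longleftrightarrow> nonzero_pt a b \<and> (\<Sum>j\<in>UNIV. a j * b j) = 0"

definition moment :: "('k::finite \<Rightarrow> complex) \<Rightarrow> ('k \<Rightarrow> complex) \<Rightarrow> real^'k" where
  "moment a b = (\<chi> j. ((cmod (a j))\<^sup>2 - (cmod (b j))\<^sup>2) /
                      (\<Sum>i\<in>UNIV. (cmod (a i))\<^sup>2 + (cmod (b i))\<^sup>2))"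

definition polyP :: "(real^'k::finite) set" where
  "polyP = convex hull ({axis j 1 | j. True} \<union> {- axis j 1 | j. True})"

definition torus :: "('k \<Rightarrow> complex) set" where
  "torus = {t. \<forall>j. cmod (t j) = 1}"

definition act_a :: "('k \<Rightarrow> complex) \<Rightarrow> ('k \<Rightarrow> complex) \<Rightarrow> ('k \<Rightarrow> complex)" where
  "act_a t a = (\<lambda>j. t j * a j)"

definition act_b :: "('k \<Rightarrow> complex) \<Rightarrow> ('k \<Rightarrow> complex) \<Rightarrow> ('k \<Rightarrow> complex)" where
  "act_b t b = (\<lambda>j. inverse (t j) * b j)"

text \<open>The rational map q to P^{k-2}: coordinates z_{2j-1} z_{2j} for j different from the
  distinguished index j0 (playing the role of j = 1). The target P^{k-2} has homogeneous
  coordinates indexed by the k-1 elements different from j0; we encode them as functions on 'k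
  whose j0-coordinate is 0. q is defined at a point iff this vector is nonzero.\<close>
definition qmap :: "'k \<Rightarrow> ('k \<Rightarrow> complex) \<Rightarrow> ('k \<Rightarrow> complex) \<Rightarrow> ('k \<Rightarrow> complex)" where
  "qmap j0 a b = (\<lambda>j. if j = j0 then 0 else a j * b j)"

end

theory Submission
  imports Defs
begin

text \<open>If all products z_{2j-1} z_{2j} vanished on a fibre point, its moment would lie on
  the boundary sum_j |u_j| = 1 of P; so q is defined on interior fibres. If q agrees at two fibre
  points, the quadric equation recovers the missing product, and after rescaling one
  representative by a square root all products agree. Writing x_j, y_j, X_j, Y_j for the squared
  moduli of the two points, the moment condition gives X_j - Y_j = l (x_j - y_j), with l the ratio
  of the norms, while X_j Y_j = x_j y_j. Then (X_j + Y_j)^2 - l^2 (x_j + y_j)^2 = 4 (1 - l^2) x_j y_j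
  has the sign of 1 - l, and summing over j against sum_j (X_j + Y_j) = l sum_j (x_j + y_j) forces
  l = 1. So the moduli agree, and points with equal moduli and equal products differ by a torus
  element.\<close>

lemma l1_norm_less_1_if_interior_polyP:
  fixes u :: "real^'k::finite"
  assumes "u \<in> interior polyP"
  shows "(\<Sum>j\<in>UNIV. \<bar>u$j\<bar>) < 1"
proof (cases "u = 0")
  case False
  define \<sigma> :: "real^'k" where "\<sigma> = (\<chi> j. sgn (u$j))"
  have "\<sigma> \<noteq> 0"
    using False by (auto simp: \<sigma>_def vec_eq_iff sgn_0_0)
  have "polyP \<subseteq> {v. \<sigma> \<bullet> v \<le> 1}"
    unfolding polyP_def
    by (rule hull_minimal) (auto simp: convex_halfspace_le inner_axis \<sigma>_def sgn_real_def)
  then have "interior polyP \<subseteq> interior {v. \<sigma> \<bullet> v \<le> 1}"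
    by (rule interior_mono)
  then have "\<sigma> \<bullet> u < 1"
    using assms \<open>\<sigma> \<noteq> 0\<close> by auto
  moreover have "\<sigma> \<bullet> u = (\<Sum>j\<in>UNIV. \<bar>u$j\<bar>)"
    by (simp add: \<sigma>_def inner_vec_def abs_sgn mult.commute)
  ultimately show ?thesis
    by simp
qed simp

lemma sum_sq_norms_pos:
  fixes a b :: "'k::finite \<Rightarrow> complex"
  assumes "nonzero_pt a b"
  shows "0 < (\<Sum>i\<in>UNIV. (cmod (a i))\<^sup>2 + (cmod (b i))\<^sup>2)"
proof -
  obtain j where "a j \<noteq> 0 \<or> b j \<noteq> 0"
    using assms by (auto simp: nonzero_pt_def)
  then show ?thesis
    by (intro sum_pos2[of UNIV j]) (auto simp: add_pos_nonneg add_nonneg_pos)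
qed

lemma moment_scale:
  assumes "c \<noteq> 0"
  shows "moment (\<lambda>j. c * a j) (\<lambda>j. c * b j) = moment a b"
proof -
  have "(cmod (c * z))\<^sup>2 = (cmod c)\<^sup>2 * (cmod z)\<^sup>2" for z
    by (simp add: norm_mult power_mult_distrib)
  then show ?thesis
    using assms by (simp add: moment_def vec_eq_iff flip: distrib_left right_diff_distrib sum_distrib_left)
qed

lemma in_quadric_prod_eq:
  assumes "in_quadric a b"
  shows "a j0 * b j0 = - (\<Sum>j\<in>UNIV - {j0}. a j * b j)"
  using assms sum.remove[of UNIV j0 "\<lambda>j. a j * b j"]
  by (simp add: in_quadric_def eq_neg_iff_add_eq_0)

lemma l1_norm_moment_eq_1_if_prods_zero:
  assumes "nonzero_pt a b" and "\<And>j. a j * b j = 0"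
  shows "(\<Sum>j\<in>UNIV. \<bar>moment a b $ j\<bar>) = 1"
proof -
  define N where "N = (\<Sum>i\<in>UNIV. (cmod (a i))\<^sup>2 + (cmod (b i))\<^sup>2)"
  have "N > 0"
    using sum_sq_norms_pos[OF assms(1)] by (simp add: N_def)
  have "\<bar>(cmod (a j))\<^sup>2 - (cmod (b j))\<^sup>2\<bar> = (cmod (a j))\<^sup>2 + (cmod (b j))\<^sup>2" for j
    using assms(2)[of j] by auto
  then have "(\<Sum>j\<in>UNIV. \<bar>moment a b $ j\<bar>) = (\<Sum>j\<in>UNIV. ((cmod (a j))\<^sup>2 + (cmod (b j))\<^sup>2) / N)"
    using \<open>N > 0\<close> by (simp add: moment_def N_def)
  also have "\<dots> = 1"
    using \<open>N > 0\<close> by (simp add: N_def flip: sum_divide_distrib)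
  finally show ?thesis .
qed

lemma prod_nonzero_off_j0_if_moment_interior:
  assumes "in_quadric a b" and "moment a b \<in> interior polyP"
  shows "\<exists>j. j \<noteq> j0 \<and> a j * b j \<noteq> 0"
proof (rule ccontr)
  assume "\<not> ?thesis"
  then have off_j0: "a j * b j = 0" if "j \<noteq> j0" for j
    using that by blast
  then have "a j0 * b j0 = 0"
    using in_quadric_prod_eq[OF assms(1), of j0] by (simp add: sum.neutral)
  with off_j0 have "a j * b j = 0" for j
    by (cases "j = j0") auto
  then have "(\<Sum>j\<in>UNIV. \<bar>moment a b $ j\<bar>) = 1"
    using assms(1) by (simp add: l1_norm_moment_eq_1_if_prods_zero in_quadric_def)
  then show False
    using l1_norm_less_1_if_interior_polyP[OF assms(2)] by simp
qed

lemma sum_sq_eq_of_prod_eq_diff_scaled: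
  fixes x y X Y l :: real
  assumes "X * Y = x * y" and "X - Y = l * (x - y)"
  shows "(X + Y)\<^sup>2 = (l * (x + y))\<^sup>2 + 4 * (1 - l\<^sup>2) * (x * y)"
proof -
  have "(X + Y)\<^sup>2 = (X - Y)\<^sup>2 + 4 * (X * Y)"
    by algebra
  then show ?thesis
    using assms by (simp add: algebra_simps power2_eq_square)
qed

lemma scale_not_less_1_if_prod_eq_diff_scaled:
  fixes x y X Y :: "'i::finite \<Rightarrow> real" and l :: real
  assumes nonneg: "\<And>j. x j \<ge> 0" "\<And>j. y j \<ge> 0" "\<And>j. X j \<ge> 0" "\<And>j. Y j \<ge> 0"
    and prod: "\<And>j. X j * Y j = x j * y j"
    and diff: "\<And>j. X j - Y j = l * (x j - y j)"
    and sum: "(\<Sum>j\<in>UNIV. X j + Y j) = l * (\<Sum>j\<in>UNIV. x j + y j)"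
    and "0 < l" and "x k * y k > 0"
  shows "\<not> l < 1"
proof
  assume "l < 1"
  then have "0 < 1 - l\<^sup>2"
    using \<open>0 < l\<close> by (simp add: power_less_one_iff)
  have sq: "(X j + Y j)\<^sup>2 = (l * (x j + y j))\<^sup>2 + 4 * (1 - l\<^sup>2) * (x j * y j)" for j
    using sum_sq_eq_of_prod_eq_diff_scaled[OF prod diff] .
  have le: "l * (x j + y j) \<le> X j + Y j" for j
  proof (rule power2_le_imp_le)
    have "0 \<le> 4 * (1 - l\<^sup>2) * (x j * y j)"
      using nonneg[of j] \<open>0 < 1 - l\<^sup>2\<close> by simp
    then show "(l * (x j + y j))\<^sup>2 \<le> (X j + Y j)\<^sup>2"
      using sq[of j] by linarith
  qed (use nonneg[of j] in simp)
  have "l * (x k + y k) < X k + Y k"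
  proof (rule power2_less_imp_less)
    have "0 < 4 * (1 - l\<^sup>2) * (x k * y k)"
      using \<open>x k * y k > 0\<close> \<open>0 < 1 - l\<^sup>2\<close> by simp
    then show "(l * (x k + y k))\<^sup>2 < (X k + Y k)\<^sup>2"
      using sq[of k] by linarith
  qed (use nonneg[of k] in simp)
  then have "(\<Sum>j\<in>UNIV. l * (x j + y j)) < (\<Sum>j\<in>UNIV. X j + Y j)"
    using le by (intro sum_strict_mono_ex1) auto
  then show False
    using sum by (simp add: sum_distrib_left)
qed

lemma eq_if_prod_eq_diff_scaled:
  fixes x y X Y :: "'i::finite \<Rightarrow> real" and l :: real
  assumes nonneg: "\<And>j. x j \<ge> 0" "\<And>j. y j \<ge> 0" "\<And>j. X j \<ge> 0" "\<And>j. Y j \<ge> 0"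
    and prod: "\<And>j. X j * Y j = x j * y j"
    and diff: "\<And>j. X j - Y j = l * (x j - y j)"
    and sum: "(\<Sum>j\<in>UNIV. X j + Y j) = l * (\<Sum>j\<in>UNIV. x j + y j)"
    and "0 < l" and "x k * y k > 0"
  shows "X j = x j \<and> Y j = y j"
proof -
  have "\<not> l < 1"
    by (rule scale_not_less_1_if_prod_eq_diff_scaled[OF assms])
  moreover have "\<not> 1 / l < 1" \<comment> \<open>the hypotheses are symmetric under (x, y, l) to (X, Y, 1 / l)\<close>
  proof (rule scale_not_less_1_if_prod_eq_diff_scaled[of X Y x y "1 / l" k])
    show "x j - y j = 1 / l * (X j - Y j)" for j
      using diff[of j] \<open>0 < l\<close> by simp
    show "(\<Sum>j\<in>UNIV. x j + y j) = 1 / l * (\<Sum>j\<in>UNIV. X j + Y j)"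
      using sum \<open>0 < l\<close> by simp
    show "0 < X k * Y k"
      using prod[of k] \<open>x k * y k > 0\<close> by simp
  qed (use nonneg prod \<open>0 < l\<close> in simp_all)
  ultimately have "l = 1"
    using \<open>0 < l\<close> by (simp add: field_simps)
  then have "X j + Y j = x j + y j"
    using sum_sq_eq_of_prod_eq_diff_scaled[OF prod diff, of j] nonneg[of j]
    by (simp add: power2_eq_iff_nonneg)
  then show ?thesis
    using diff[of j] \<open>l = 1\<close> by simp
qed

lemma norms_eq_if_moment_eq_prods_eq:
  assumes "moment a' b' = moment a b" and "\<And>j. a' j * b' j = a j * b j"
    and "a j1 * b j1 \<noteq> 0"
  shows "cmod (a' j) = cmod (a j) \<and> cmod (b' j) = cmod (b j)"
proof -
  define N where "N = (\<Sum>i\<in>UNIV. (cmod (a i))\<^sup>2 + (cmod (b i))\<^sup>2)"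
  define N' where "N' = (\<Sum>i\<in>UNIV. (cmod (a' i))\<^sup>2 + (cmod (b' i))\<^sup>2)"
  have "a' j1 * b' j1 \<noteq> 0"
    using assms(2,3) by simp
  then have "nonzero_pt a b" and "nonzero_pt a' b'"
    using assms(3) by (auto simp: nonzero_pt_def)
  then have "N > 0" and "N' > 0"
    by (simp_all add: sum_sq_norms_pos N_def N'_def)
  have "(cmod (a' j))\<^sup>2 = (cmod (a j))\<^sup>2 \<and> (cmod (b' j))\<^sup>2 = (cmod (b j))\<^sup>2"
  proof (rule eq_if_prod_eq_diff_scaled[where l = "N' / N" and k = j1])
    show "(cmod (a' i))\<^sup>2 * (cmod (b' i))\<^sup>2 = (cmod (a i))\<^sup>2 * (cmod (b i))\<^sup>2" for i
      using arg_cong[OF assms(2)[of i], of "\<lambda>z. (cmod z)\<^sup>2"] by (simp add: norm_mult power_mult_distrib)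
    show "(cmod (a' i))\<^sup>2 - (cmod (b' i))\<^sup>2 = N' / N * ((cmod (a i))\<^sup>2 - (cmod (b i))\<^sup>2)" for i
      using arg_cong[OF assms(1), of "\<lambda>v. v $ i"] \<open>N > 0\<close> \<open>N' > 0\<close>
      by (simp add: moment_def N_def N'_def field_simps)
    show "(\<Sum>i\<in>UNIV. (cmod (a' i))\<^sup>2 + (cmod (b' i))\<^sup>2) = N' / N * (\<Sum>i\<in>UNIV. (cmod (a i))\<^sup>2 + (cmod (b i))\<^sup>2)"
      using \<open>N > 0\<close> by (simp add: N_def N'_def)
    show "0 < (cmod (a j1))\<^sup>2 * (cmod (b j1))\<^sup>2"
      using assms(3) by simp
  qed (use \<open>N > 0\<close> \<open>N' > 0\<close> in simp_all)
  then show ?thesis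
    by (simp add: power2_eq_iff_nonneg)
qed

lemma unimodular_factor_if_norms_prod_eq:
  fixes a b a' b' :: complex
  assumes "cmod a' = cmod a" and "cmod b' = cmod b" and "a' * b' = a * b"
  shows "\<exists>t. cmod t = 1 \<and> a' = t * a \<and> b' = inverse t * b"
proof (cases "a = 0")
  case False
  then have "a' \<noteq> 0"
    using assms(1) by auto
  define t where "t = a' / a"
  have "cmod t = 1"
    using assms(1) False by (simp add: t_def norm_divide)
  moreover have "b' = inverse t * b"
    using assms(3) False \<open>a' \<noteq> 0\<close> by (simp add: t_def field_simps)
  ultimately show ?thesis
    using False by (auto simp: t_def)
next
  case True
  then have "a' = 0"
    using assms(1) by simp
  show ?thesis
  proof (cases "b = 0")
    case False
    then have "b' \<noteq> 0"
      using assms(2) by auto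
    define t where "t = b / b'"
    have "cmod t = 1"
      using assms(2) False by (simp add: t_def norm_divide)
    moreover have "b' = inverse t * b"
      using False \<open>b' \<noteq> 0\<close> by (simp add: t_def)
    ultimately show ?thesis
      using True \<open>a' = 0\<close> by auto
  next
    case True
    then show ?thesis
      using \<open>a = 0\<close> \<open>a' = 0\<close> assms(2) by (intro exI[of _ 1]) simp
  qed
qed

lemma torus_orbit_if_norms_prods_eq:
  assumes "\<And>j. cmod (a' j) = cmod (a j)" and "\<And>j. cmod (b' j) = cmod (b j)"
    and "\<And>j. a' j * b' j = a j * b j"
  shows "\<exists>t\<in>torus. a' = act_a t a \<and> b' = act_b t b"
proof -
  obtain t where "\<And>j. cmod (t j) = 1 \<and> a' j = t j * a j \<and> b' j = inverse (t j) * b j"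
    using unimodular_factor_if_norms_prod_eq[OF assms] by metis
  then show ?thesis
    by (auto simp: torus_def act_a_def act_b_def)
qed

lemma prod_eq_if_qmap_proportional:
  assumes "in_quadric a b" and "in_quadric a' b'"
    and "\<And>j. qmap j0 a' b' j = c * qmap j0 a b j"
  shows "a' j * b' j = c * (a j * b j)"
proof -
  have off_j0: "a' j * b' j = c * (a j * b j)" if "j \<noteq> j0" for j
    using assms(3)[of j] that by (simp add: qmap_def)
  have "a' j0 * b' j0 = - (\<Sum>j\<in>UNIV - {j0}. a' j * b' j)"
    using in_quadric_prod_eq[OF assms(2)] .
  also have "\<dots> = - (\<Sum>j\<in>UNIV - {j0}. c * (a j * b j))"
    using off_j0 by (intro arg_cong[of _ _ uminus] sum.cong) auto
  also have "\<dots> = c * (a j0 * b j0)"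
    using in_quadric_prod_eq[OF assms(1), of j0] by (simp add: sum_distrib_left)
  finally show ?thesis
    using off_j0 by (cases "j = j0") auto
qed

lemma torus_orbit_if_qmap_proportional:
  assumes "in_quadric a b" and "in_quadric a' b'" and "moment a' b' = moment a b"
    and "a j1 * b j1 \<noteq> 0" and "proj_eq (qmap j0 a b) (qmap j0 a' b')"
  shows "\<exists>t\<in>torus. proj_eq2 (act_a t a) (act_b t b) a' b'"
proof -
  obtain c where "c \<noteq> 0" and qmap_c: "\<And>j. qmap j0 a' b' j = c * qmap j0 a b j"
    using assms(5) unfolding proj_eq_def by blast
  define s where "s = csqrt c"
  have "s * s = c" and "s \<noteq> 0"
    using \<open>c \<noteq> 0\<close> by (simp_all add: s_def flip: power2_eq_square)
  define a'' where "a'' = (\<lambda>j. inverse s * a' j)"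
  define b'' where "b'' = (\<lambda>j. inverse s * b' j)"
  have "moment a'' b'' = moment a b"
    using moment_scale[of "inverse s" a' b'] \<open>s \<noteq> 0\<close> assms(3) by (simp add: a''_def b''_def)
  moreover have prods: "a'' j * b'' j = a j * b j" for j
  proof -
    have "a'' j * b'' j = inverse (s * s) * (a' j * b' j)"
      by (simp add: a''_def b''_def)
    then show ?thesis
      using prod_eq_if_qmap_proportional[OF assms(1,2) qmap_c, of j] \<open>s * s = c\<close> \<open>c \<noteq> 0\<close> by simp
  qed
  ultimately have "cmod (a'' j) = cmod (a j) \<and> cmod (b'' j) = cmod (b j)" for j
    using norms_eq_if_moment_eq_prods_eq assms(4) by blast
  then obtain t where "t \<in> torus" and "a'' = act_a t a" and "b'' = act_b t b"
    using torus_orbit_if_norms_prods_eq[of a'' a b'' b] prods by blast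
  moreover have "a' j = s * a'' j" and "b' j = s * b'' j" for j
    using \<open>s \<noteq> 0\<close> by (simp_all add: a''_def b''_def)
  ultimately have "proj_eq2 (act_a t a) (act_b t b) a' b'"
    unfolding proj_eq2_def using \<open>s \<noteq> 0\<close> by (intro exI[of _ s]) simp
  with \<open>t \<in> torus\<close> show ?thesis
    by blast
qed

lemma torus_nonzero:
  assumes "t \<in> torus"
  shows "t j \<noteq> 0"
proof -
  have "cmod (t j) = 1"
    using assms by (simp add: torus_def)
  then show ?thesis
    by auto
qed

lemma qmap_proportional_if_proj_eq2_act:
  assumes "\<And>j. t j \<noteq> 0" and "proj_eq2 (act_a t a) (act_b t b) a' b'"
  shows "proj_eq (qmap j0 a b) (qmap j0 a' b')"
proof -
  obtain c where "c \<noteq> 0" and c: "\<And>j. a' j = c * (t j * a j) \<and> b' j = c * (inverse (t j) * b j)"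
    using assms(2) unfolding proj_eq2_def act_a_def act_b_def by blast
  have "qmap j0 a' b' j = c\<^sup>2 * qmap j0 a b j" for j
    using c[of j] assms(1)[of j] by (simp add: qmap_def field_simps power2_eq_square)
  then show ?thesis
    unfolding proj_eq_def using \<open>c \<noteq> 0\<close> by (intro exI[of _ "c\<^sup>2"]) simp
qed

theorem lemma3p3:
  fixes j0 :: "'k::finite" and u :: "real^'k"
  assumes "CARD('k) \<ge> 2"
    and "u \<in> interior polyP"
  shows "(\<forall>a b. in_quadric a b \<and> moment a b = u \<longrightarrow> qmap j0 a b \<noteq> (\<lambda>_. 0))
       \<and> (\<forall>a b a' b'. in_quadric a b \<and> moment a b = u \<and> in_quadric a' b' \<and> moment a' b' = u \<longrightarrow>
            (proj_eq (qmap j0 a b) (qmap j0 a' b') \<longleftrightarrow>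
             (\<exists>t\<in>torus. proj_eq2 (act_a t a) (act_b t b) a' b')))"
proof (intro conjI allI impI)
  fix a b
  assume "in_quadric a b \<and> moment a b = u"
  then obtain j where "j \<noteq> j0" and "a j * b j \<noteq> 0"
    using prod_nonzero_off_j0_if_moment_interior assms(2) by blast
  then have "qmap j0 a b j \<noteq> 0"
    by (simp add: qmap_def)
  then show "qmap j0 a b \<noteq> (\<lambda>_. 0)"
    by force
next
  fix a b a' b'
  assume "in_quadric a b \<and> moment a b = u \<and> in_quadric a' b' \<and> moment a' b' = u"
  then have fibre: "in_quadric a b" "in_quadric a' b'" "moment a' b' = moment a b"
    and "moment a b \<in> interior polyP"
    using assms(2) by simp_all
  obtain j1 where "a j1 * b j1 \<noteq> 0"
    using prod_nonzero_off_j0_if_moment_interior[OF fibre(1) \<open>moment a b \<in> interior polyP\<close>]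
    by blast
  show "proj_eq (qmap j0 a b) (qmap j0 a' b') \<longleftrightarrow>
        (\<exists>t\<in>torus. proj_eq2 (act_a t a) (act_b t b) a' b')"
  proof
    show "proj_eq (qmap j0 a b) (qmap j0 a' b') \<Longrightarrow>
          \<exists>t\<in>torus. proj_eq2 (act_a t a) (act_b t b) a' b'"
      by (rule torus_orbit_if_qmap_proportional[OF fibre \<open>a j1 * b j1 \<noteq> 0\<close>])
    assume "\<exists>t\<in>torus. proj_eq2 (act_a t a) (act_b t b) a' b'"
    then obtain t where "t \<in> torus" and "proj_eq2 (act_a t a) (act_b t b) a' b'"
      by blast
    then show "proj_eq (qmap j0 a b) (qmap j0 a' b')"
      using qmap_proportional_if_proj_eq2_act torus_nonzero by metis
  qed
qed

end
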